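(* Let $\vec{k}=(k_1,\dots,k_n)$ be a vector of positive integers and let $\overline{D}$ be a $\vec{k}$-Dyck path with $\operatorname{area}(\overline{D})>0$. Let $\mathbb{S}$ be the rightmost red arrow of $\overline{D}$ among the red arrows whose starting rank is maximal among all red arrows, and let $\mathbb{W}$ be the step immediately following $\mathbb{S}$ (which is a blue arrow). Let $\overline{D}'$ be the word obtained from $\overline{D}$ by interchanging the two adjacent letters $\mathbb{S}$ and $\mathbb{W}$ (so $\overline{D}'$ is again a $\vec{k}$-Dyck path, with $\operatorname{area}(\overline{D}')=\operatorname{area}(\overline{D})-1$). Let $D=\Phi(\overline{D})$ and $D'=\Phi(\overline{D}')$. Then $$\operatorname{dinv}(\overline{D})-\operatorname{dinv}(\overline{D}')=\operatorname{area}(D)-\operatorname{area}(D').$$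
   Context: For a vector $\vec{k}=(k_1,\dots,k_n)$ of positive integers put $|\vec{k}|=\sum_i k_i$. A $\vec{k}$-Dyck path is a word $D=\sigma_1\cdots\sigma_N$, $N=|\vec{k}|+n$, consisting of $n$ red arrows and $|\vec{k}|$ blue arrows $W$, where the $j$-th red arrow from the left is $S^{k_j}$ of length $\ell=k_j$ and value $k_j$, and each $W$ has value $-1$. Ranks: $r_1=0$, $r_{m+1}=r_m+(\text{value of }\sigma_m)$, required to satisfy $r_m\ge0$ for all $m$. The starting rank of $\sigma_m$ is $r(\sigma_m)=r_m$ and its end rank is $\dot r(\sigma_m)=r_{m+1}$. (Geometrically: a path from $(0,0)$ to $(N,0)$ never below the horizontal axis with up steps $(1,k_j)$ and down steps $(1,-1)$; ranks are starting heights.) Write $A<B$ if step $A$ is left of step $B$, and $A<^sB$ if $r(A)<r(B)$, or $r(A)=r(B)$ and $B<A$. The sweep map $\Phi$ sends $D$ to the word listing its steps in increasing $<^s$ order; this is again a Dyck path for some rearrangement of $\vec{k}$. $\operatorname{area}(D)=\sum_S r(S)$ over red arrows $S$. $\operatorname{dinv}(D)$ = (sweep dinv) + (red dinv), where sweep dinv is the number of pairs (blue arrow $W$, red arrow $S$) with $W<S$ and $W$ sweeping $S$, i.e. $W$ intersects $S$ when moved to the right past $S$ along a line of slope $0<\epsilon\ll1$; equivalently $r(S)\le r(W)\le\dot r(S)$; and red dinv is $\sum_{S_i<S_j}\chi(r(S_i)\ge r(S_j)\ \&\ \dot r(S_j)>\dot r(S_i))(\dot r(S_j)-\dot r(S_i))+\sum_{S_i<S_j}\chi(r(S_i)<r(S_j)\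 \&\ \dot r(S_j)<\dot r(S_i))(\dot r(S_i)-\dot r(S_j))$ over pairs of red arrows. *)

theory Defs
  imports Main "HOL-Library.Product_Lexorder"
begin

text \<open>A step of a word: a red arrow S^k (value k) or a blue arrow W (value -1).\<close>
datatype step = Red nat | Blue

fun step_val :: "step \<Rightarrow> int" where
  "step_val (Red k) = int k"
| "step_val Blue = -1"

fun is_red :: "step \<Rightarrow> bool" where
  "is_red (Red k) = True"
| "is_red Blue = False"

text \<open>Positions are 0-indexed. rank w i is the starting rank of step i
  (r_{i+1} in the paper); rank w (Suc i) is its end rank.\<close>
definition rank :: "step list \<Rightarrow> nat \<Rightarrow> int" where
  "rank w i = (\<Sum>m<i. step_val (w ! m))"

definition red_lengths :: "step list \<Rightarrow> nat list" where
  "red_lengths w = [k. Red k \<leftarrow> w]"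

definition is_kdyck :: "nat list \<Rightarrow> step list \<Rightarrow> bool" where
  "is_kdyck kv w \<longleftrightarrow>
     red_lengths w = kv \<and>
     length (filter (\<lambda>x. x = Blue) w) = sum_list kv \<and>
     (\<forall>m\<le>length w. rank w m \<ge> 0)"

definition sweep :: "step list \<Rightarrow> step list" where
  "sweep w = map (\<lambda>i. w ! i) (sort_key (\<lambda>i. (rank w i, - int i)) [0..<length w])"

definition area :: "step list \<Rightarrow> int" where
  "area w = (\<Sum>i\<in>{i. i < length w \<and> is_red (w ! i)}. rank w i)"

definition sweep_dinv :: "step list \<Rightarrow> int" where
  "sweep_dinv w = int (card {(i, j). i < j \<and> j < length w \<and> w ! i = Blue \<and> is_red (w ! j)
                               \<and> rank w j \<le> rank w i \<and> rank w i \<le> rank w (Suc j)})"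

definition red_dinv :: "step list \<Rightarrow> int" where
  "red_dinv w = (\<Sum>(i, j)\<in>{(i, j). i < j \<and> j < length w \<and> is_red (w ! i) \<and> is_red (w ! j)}.
      (if rank w i \<ge> rank w j \<and> rank w (Suc j) > rank w (Suc i)
       then rank w (Suc j) - rank w (Suc i) else 0)
    + (if rank w i < rank w j \<and> rank w (Suc j) < rank w (Suc i)
       then rank w (Suc i) - rank w (Suc j) else 0))"

definition dinv :: "step list \<Rightarrow> int" where
  "dinv w = sweep_dinv w + red_dinv w"

definition swap_adj :: "step list \<Rightarrow> nat \<Rightarrow> step list" where
  "swap_adj w s = w[s := w ! Suc s, Suc s := w ! s]"

end

theory Submission
  imports Defs
begin

text \<open>Both dinv w and the area of the sweep of w are sums over ordered pairs of positions of a
  contribution that depends only on the two letters and their ranks. Swapping S and W changes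
  only the rank between them, so only pairs meeting {s, s + 1} change. In the swapped path the
  blue arrow sweeps S, which adds one to dinv. For every other step j the net change is a signed
  crossing of the level r(S) + k (j left of S) or r(S) (j right of W); these crossings telescope
  to 0 before S, since the path starts at 0, and to 1 after W, since it ends at 0 < r(S).\<close>

lemma rank_0 [simp]: "rank w 0 = 0"
  by (simp add: rank_def)

lemma rank_Suc: "rank w (Suc i) = rank w i + step_val (w ! i)"
  by (simp add: rank_def)

lemma rank_length:
  "rank w (length w) = int (sum_list (red_lengths w)) - int (length (filter (\<lambda>x. x = Blue) w))"
proof -
  have "sum_list (map step_val w) =
    int (sum_list (red_lengths w)) - int (length (filter (\<lambda>x. x = Blue) w))"
    by (induction w) (auto simp: red_lengths_def split: step.split)
  then show ?thesis
    by (simp add: rank_def sum_list_sum_nth atLeast0LessThan)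
qed

lemma rank_length_kdyck: "is_kdyck kv w \<Longrightarrow> rank w (length w) = 0"
  by (simp add: is_kdyck_def rank_length)

lemma Red_in_red_lengths: "Red k \<in> set w \<Longrightarrow> k \<in> set (red_lengths w)"
  by (induction w) (auto simp: red_lengths_def split: step.split)

lemma image_nth_prefix_sorted_key:
  fixes key :: "'a \<Rightarrow> 'b::linorder"
  assumes "distinct xs" "sorted (map key xs)" "inj_on key (set xs)" "p < length xs"
  shows "(\<lambda>q. xs ! q) ` {..<p} = {x \<in> set xs. key x < key (xs ! p)}"
proof
  have mono: "key (xs ! i) \<le> key (xs ! j)" if "i \<le> j" "j < length xs" for i j
    using assms(2) that by (auto simp: sorted_iff_nth_mono)
  show "(\<lambda>q. xs ! q) ` {..<p} \<subseteq> {x \<in> set xs. key x < key (xs ! p)}"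
  proof clarify
    fix q assume "q < p"
    then have "key (xs ! q) \<noteq> key (xs ! p)"
      using assms by (auto simp: nth_eq_iff_index_eq dest: inj_onD)
    then show "xs ! q \<in> set xs \<and> key (xs ! q) < key (xs ! p)"
      using mono[of q p] \<open>q < p\<close> assms(4) by auto
  qed
  show "{x \<in> set xs. key x < key (xs ! p)} \<subseteq> (\<lambda>q. xs ! q) ` {..<p}"
  proof clarify
    fix x assume "x \<in> set xs" "key x < key (xs ! p)"
    then obtain q where "q < length xs" "x = xs ! q" "\<not> p \<le> q"
      using mono[of p] by (metis in_set_conv_nth leD)
    then show "x \<in> (\<lambda>q. xs ! q) ` {..<p}" by auto
  qed
qed

lemma sum_prefix_sorted_key:
  fixes key :: "'a \<Rightarrow> 'b::linorder"
  assumes "distinct xs" "sorted (map key xs)" "inj_on key (set xs)" "p < length xs"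
  shows "(\<Sum>q<p. f (xs ! q)) = (\<Sum>x | x \<in> set xs \<and> key x < key (xs ! p). f x)"
proof -
  have "inj_on (\<lambda>q. xs ! q) {..<p}"
    using assms(1,4) by (intro inj_on_nth) auto
  then show ?thesis
    using image_nth_prefix_sorted_key[OF assms] sum.reindex[of "\<lambda>q. xs ! q" "{..<p}" f]
    by simp
qed

definition sweep_less :: "step list \<Rightarrow> nat \<Rightarrow> nat \<Rightarrow> bool" where
  "sweep_less w i j \<longleftrightarrow> rank w i < rank w j \<or> (rank w i = rank w j \<and> j < i)"

definition sweep_order :: "step list \<Rightarrow> nat list" where
  "sweep_order w = sort_key (\<lambda>i. (rank w i, - int i)) [0..<length w]"

lemma sweep_eq_map_sweep_order: "sweep w = map (\<lambda>i. w ! i) (sweep_order w)"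
  by (simp add: sweep_def sweep_order_def)

lemma length_sweep_order [simp]: "length (sweep_order w) = length w"
  by (simp add: sweep_order_def)

lemma set_sweep_order [simp]: "set (sweep_order w) = {..<length w}"
  by (auto simp: sweep_order_def)

lemma distinct_sweep_order: "distinct (sweep_order w)"
  by (simp add: sweep_order_def)

lemma rank_sweep:
  assumes "p < length w"
  shows "rank (sweep w) p =
    (\<Sum>i | i < length w \<and> sweep_less w i (sweep_order w ! p). step_val (w ! i))"
proof -
  let ?key = "\<lambda>i. (rank w i, - int i)"
  have "sorted (map ?key (sweep_order w))"
    by (simp add: sweep_order_def)
  moreover have "inj_on ?key (set (sweep_order w))"
    by (auto simp: inj_on_def)
  moreover have "?key i < ?key j \<longleftrightarrow> sweep_less w i j" for i j
    by (auto simp: sweep_less_def less_prod_def)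
  ultimately show ?thesis
    using sum_prefix_sorted_key[OF distinct_sweep_order, of ?key w p "\<lambda>i. step_val (w ! i)"]
      assms
    by (simp add: rank_def sweep_eq_map_sweep_order)
qed

text \<open>The red step i of w starts, in the sweep of w, at the total value of the steps swept
  before it.\<close>
definition area_sweep_contrib :: "step list \<Rightarrow> nat \<Rightarrow> nat \<Rightarrow> int" where
  "area_sweep_contrib w i j = (if is_red (w ! i) \<and> sweep_less w j i then step_val (w ! j) else 0)"

lemma area_sweep_eq_sum:
  "area (sweep w) = (\<Sum>i<length w. \<Sum>j<length w. area_sweep_contrib w i j)"
proof -
  let ?\<sigma> = "\<lambda>p. sweep_order w ! p"
  have bij: "bij_betw ?\<sigma> {..<length w} {..<length w}"
    using distinct_sweep_order[of w]
    by (metis bij_betw_nth lessThan_atLeast0 length_sweep_order set_sweep_order)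
  have "area (sweep w) = (\<Sum>p\<in>{p \<in> {..<length w}. is_red (w ! ?\<sigma> p)}. rank (sweep w) p)"
    unfolding area_def by (rule sum.cong) (auto simp: sweep_eq_map_sweep_order)
  also have "\<dots> = (\<Sum>p<length w. if is_red (w ! ?\<sigma> p) then rank (sweep w) p else 0)"
    by (simp only: sum.inter_filter[OF finite_lessThan])
  also have "\<dots> = (\<Sum>p<length w. \<Sum>j<length w. area_sweep_contrib w (?\<sigma> p) j)"
    by (intro sum.cong refl)
      (simp add: rank_sweep area_sweep_contrib_def sum.inter_filter[symmetric] lessThan_def)
  also have "\<dots> = (\<Sum>i<length w. \<Sum>j<length w. area_sweep_contrib w i j)"
    by (rule sum.reindex_bij_betw[OF bij])
  finally show ?thesis .
qed

lemma sum_pairs_less_eq_double_sum: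
  "(\<Sum>p\<in>{(i, j). i < j \<and> j < (n::nat) \<and> P i j}. g p) =
   (\<Sum>i<n. \<Sum>j<n. if i < j \<and> P i j then g (i, j) else (0::'a::comm_monoid_add))"
proof -
  have "(\<Sum>p\<in>{(i, j). i < j \<and> j < n \<and> P i j}. g p) =
    (\<Sum>p\<in>{..<n} \<times> {..<n}. if fst p < snd p \<and> P (fst p) (snd p) then g p else 0)"
    by (subst sum.inter_filter[symmetric]) (auto intro!: sum.cong)
  then show ?thesis
    by (auto simp: sum.cartesian_product intro!: sum.cong)
qed

definition dinv_contrib :: "step list \<Rightarrow> nat \<Rightarrow> nat \<Rightarrow> int" where
  "dinv_contrib w i j = (if i < j then
     (if w ! i = Blue \<and> is_red (w ! j) \<and> rank w j \<le> rank w i \<and> rank w i \<le> rank w (Suc j)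
      then 1 else 0)
   + (if is_red (w ! i) \<and> is_red (w ! j) then
       (if rank w i \<ge> rank w j \<and> rank w (Suc j) > rank w (Suc i)
        then rank w (Suc j) - rank w (Suc i) else 0)
     + (if rank w i < rank w j \<and> rank w (Suc j) < rank w (Suc i)
        then rank w (Suc i) - rank w (Suc j) else 0) else 0)
   else 0)"

lemma dinv_eq_sum: "dinv w = (\<Sum>i<length w. \<Sum>j<length w. dinv_contrib w i j)"
  unfolding dinv_def sweep_dinv_def red_dinv_def card_eq_sum of_nat_sum
    sum_pairs_less_eq_double_sum sum.distrib[symmetric]
  by (intro sum.cong refl) (simp add: dinv_contrib_def)

definition dinv_area_contrib :: "step list \<Rightarrow> nat \<Rightarrow> nat \<Rightarrow> int" where
  "dinv_area_contrib w i j = dinv_contrib w i j - area_sweep_contrib w i j"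

lemma dinv_minus_area_sweep_eq_sum:
  "dinv w - area (sweep w) = (\<Sum>i<length w. \<Sum>j<length w. dinv_area_contrib w i j)"
  by (simp add: dinv_eq_sum area_sweep_eq_sum dinv_area_contrib_def sum_subtractf)

lemma double_sum_split:
  fixes H :: "'a \<Rightarrow> 'a \<Rightarrow> 'b::comm_monoid_add"
  assumes "finite A" "B \<subseteq> A"
  shows "(\<Sum>x\<in>A. \<Sum>y\<in>A. H x y) =
    (\<Sum>x\<in>A - B. \<Sum>y\<in>A - B. H x y) + (\<Sum>y\<in>A - B. \<Sum>x\<in>B. H x y + H y x)
    + (\<Sum>x\<in>B. \<Sum>y\<in>B. H x y)"
proof -
  have split: "(\<Sum>x\<in>A. f x) = (\<Sum>x\<in>A - B. f x) + (\<Sum>x\<in>B. f x)" for f :: "'a \<Rightarrow> 'b"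
    using assms by (metis sum.subset_diff)
  have "(\<Sum>x\<in>A. \<Sum>y\<in>A. H x y) =
    (\<Sum>x\<in>A - B. \<Sum>y\<in>A - B. H x y) + (\<Sum>x\<in>A - B. \<Sum>y\<in>B. H x y)
    + (\<Sum>x\<in>B. \<Sum>y\<in>A - B. H x y) + (\<Sum>x\<in>B. \<Sum>y\<in>B. H x y)"
    unfolding split sum.distrib by (simp add: ac_simps)
  moreover have "(\<Sum>x\<in>B. \<Sum>y\<in>A - B. H x y) = (\<Sum>y\<in>A - B. \<Sum>x\<in>B. H x y)"
    by (rule sum.swap)
  ultimately show ?thesis
    by (simp add: sum.distrib ac_simps)
qed

text \<open>A blue step starting at level L crosses the line between L - 1 and L downwards, a red
  step from below L to at least L crosses it upwards; so the crossings telescope.\<close>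
definition level_crossing :: "step list \<Rightarrow> int \<Rightarrow> nat \<Rightarrow> int" where
  "level_crossing w L i = (if w ! i = Blue \<and> rank w i = L then 1 else 0)
      - (if is_red (w ! i) \<and> rank w i < L \<and> L \<le> rank w (Suc i) then 1 else 0)"

lemma sum_level_crossing:
  assumes "p \<le> q"
  shows "(\<Sum>i\<in>{p..<q}. level_crossing w L i) =
    (if L \<le> rank w p then 1 else 0) - (if L \<le> rank w q then 1 else 0)"
  using assms
proof (induction q rule: dec_induct)
  case (step q)
  then show ?case
    by (cases "w ! q") (auto simp: level_crossing_def rank_Suc)
qed simp

lemma length_swap_adj [simp]: "length (swap_adj w s) = length w"
  by (simp add: swap_adj_def)

lemma nth_swap_adj:
  assumes "Suc s < length w"
  shows "swap_adj w s ! m = (if m = s then w ! Suc s else if m = Suc s then w ! s else w ! m)"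
  using assms by (simp add: swap_adj_def nth_list_update)

lemma rank_swap_adj:
  assumes "Suc s < length w"
  shows "rank (swap_adj w s) m =
    (if m = Suc s then rank w s + step_val (w ! Suc s) else rank w m)"
proof -
  have before: "rank (swap_adj w s) m = rank w m" if "m \<le> s" for m
    unfolding rank_def using that assms by (intro sum.cong) (auto simp: nth_swap_adj)
  have after: "rank (swap_adj w s) m = rank w m" if "Suc (Suc s) \<le> m" for m
    using that
  proof (induction m rule: dec_induct)
    case base
    then show ?case
      using assms by (simp add: rank_Suc before nth_swap_adj)
  next
    case (step m)
    then show ?case
      using assms by (simp add: rank_Suc nth_swap_adj)
  qed
  show ?thesis
    using before[of m] after[of m] before[of s] assms
    by (cases "m \<le> s") (auto simp: rank_Suc nth_swap_adj)
qed

lemma dinv_area_contrib_swap_adj: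
  assumes "Suc s < length w" "i \<notin> {s, Suc s}" "j \<notin> {s, Suc s}"
  shows "dinv_area_contrib (swap_adj w s) i j = dinv_area_contrib w i j"
  using assms
  by (simp add: dinv_area_contrib_def dinv_contrib_def area_sweep_contrib_def sweep_less_def
      rank_swap_adj nth_swap_adj)

locale highest_red_swap =
  fixes w :: "step list" and s k :: nat
  assumes s_less: "s < length w"
    and nth_s: "w ! s = Red k"
    and k_pos: "0 < k"
    and rank_s_max: "\<And>j. j < length w \<Longrightarrow> is_red (w ! j) \<Longrightarrow> rank w j \<le> rank w s"
    and rank_s_rightmost:
      "\<And>j. j < length w \<Longrightarrow> s < j \<Longrightarrow> is_red (w ! j) \<Longrightarrow> rank w j < rank w s"
    and rank_s_pos: "0 < rank w s"
    and rank_end: "rank w (length w) = 0"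
begin

lemma rank_Suc_s: "rank w (Suc s) = rank w s + int k"
  by (simp add: rank_Suc nth_s)

lemma Suc_s_less: "Suc s < length w"
proof -
  have "Suc s \<noteq> length w"
    using rank_end rank_Suc_s rank_s_pos by auto
  then show ?thesis
    using s_less by simp
qed

lemma nth_Suc_s: "w ! Suc s = Blue"
proof (cases "w ! Suc s")
  case (Red k')
  then have "rank w (Suc s) \<le> rank w s"
    using rank_s_max Suc_s_less by simp
  then show ?thesis
    using rank_Suc_s k_pos by simp
qed

lemma rank_Suc_Suc_s: "rank w (Suc (Suc s)) = rank w s + int k - 1"
  by (simp add: rank_Suc[of w "Suc s"] rank_Suc_s nth_Suc_s)

abbreviation w' :: "step list" where
  "w' \<equiv> swap_adj w s"

lemma nth_w': "w' ! m = (if m = s then Blue else if m = Suc s then Red k else w ! m)"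
  by (simp add: nth_swap_adj Suc_s_less nth_s nth_Suc_s)

lemma rank_w': "rank w' m = (if m = Suc s then rank w s - 1 else rank w m)"
  by (simp add: rank_swap_adj Suc_s_less nth_Suc_s)

definition interaction :: "step list \<Rightarrow> nat \<Rightarrow> int" where
  "interaction v j = (\<Sum>x\<in>{s, Suc s}. dinv_area_contrib v x j + dinv_area_contrib v j x)"

lemmas interaction_simps = interaction_def dinv_area_contrib_def dinv_contrib_def
  area_sweep_contrib_def sweep_less_def level_crossing_def nth_w' rank_w' nth_s nth_Suc_s
  rank_Suc_s rank_Suc_Suc_s

lemma interaction_diff_before:
  assumes "j < s"
  shows "interaction w j - interaction w' j = level_crossing w (rank w s + int k) j"
proof (cases "w ! j")
  case (Red kj)
  then have "rank w j \<le> rank w s"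
    using rank_s_max assms s_less by simp
  then show ?thesis
    using assms k_pos Red by (simp add: interaction_simps rank_Suc[of w j]; arith)
next
  case Blue
  then show ?thesis
    using assms k_pos by (simp add: interaction_simps rank_Suc[of w j]; arith)
qed

lemma interaction_diff_after:
  assumes "Suc s < j" "j < length w"
  shows "interaction w j - interaction w' j = level_crossing w (rank w s) j"
proof (cases "w ! j")
  case (Red kj)
  then have "rank w j < rank w s"
    using rank_s_rightmost assms by simp
  then show ?thesis
    using assms k_pos Red by (simp add: interaction_simps rank_Suc[of w j]; arith)
next
  case Blue
  then show ?thesis
    using assms k_pos by (simp add: interaction_simps rank_Suc[of w j]; arith)
qed

lemma sum_interaction_diff:
  "(\<Sum>j\<in>{..<length w} - {s, Suc s}. interaction w j - interaction w' j) = 1"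
proof -
  have split: "{..<length w} - {s, Suc s} = {0..<s} \<union> {Suc (Suc s)..<length w}"
    using Suc_s_less by auto
  have "(\<Sum>j\<in>{..<length w} - {s, Suc s}. interaction w j - interaction w' j) =
    (\<Sum>j\<in>{0..<s}. level_crossing w (rank w s + int k) j)
    + (\<Sum>j\<in>{Suc (Suc s)..<length w}. level_crossing w (rank w s) j)"
    unfolding split
    by (simp add: sum.union_disjoint interaction_diff_before interaction_diff_after)
  also have "\<dots> = 1"
    using Suc_s_less k_pos rank_s_pos
    by (simp add: sum_level_crossing rank_Suc_Suc_s rank_end)
  finally show ?thesis .
qed

lemma sum_contrib_on_pair:
  "(\<Sum>x\<in>{s, Suc s}. \<Sum>y\<in>{s, Suc s}. dinv_area_contrib w x y) = 0"
  using k_pos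
  by (simp add: dinv_area_contrib_def dinv_contrib_def area_sweep_contrib_def sweep_less_def
      nth_s nth_Suc_s rank_Suc_s)

lemma sum_contrib_on_pair_swapped:
  "(\<Sum>x\<in>{s, Suc s}. \<Sum>y\<in>{s, Suc s}. dinv_area_contrib w' x y) = 1"
  using k_pos
  by (simp add: dinv_area_contrib_def dinv_contrib_def area_sweep_contrib_def sweep_less_def
      nth_w' rank_w' rank_Suc_s rank_Suc_Suc_s)

lemma dinv_minus_area_sweep_split:
  fixes v :: "step list"
  assumes "length v = length w"
  defines "R \<equiv> {..<length w} - {s, Suc s}"
  shows "dinv v - area (sweep v) =
    (\<Sum>x\<in>R. \<Sum>y\<in>R. dinv_area_contrib v x y) + (\<Sum>j\<in>R. interaction v j)
    + (\<Sum>x\<in>{s, Suc s}. \<Sum>y\<in>{s, Suc s}. dinv_area_contrib v x y)"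
  unfolding dinv_minus_area_sweep_eq_sum assms(1) R_def interaction_def
  by (rule double_sum_split) (use Suc_s_less in auto)

theorem dinv_minus_area_sweep_swap: "dinv w' - area (sweep w') = dinv w - area (sweep w)"
proof -
  let ?R = "{..<length w} - {s, Suc s}"
  have "(\<Sum>x\<in>?R. \<Sum>y\<in>?R. dinv_area_contrib w' x y) =
    (\<Sum>x\<in>?R. \<Sum>y\<in>?R. dinv_area_contrib w x y)"
    using Suc_s_less by (intro sum.cong refl) (simp add: dinv_area_contrib_swap_adj)
  then show ?thesis
    using dinv_minus_area_sweep_split[of w'] dinv_minus_area_sweep_split[of w]
      sum_interaction_diff sum_contrib_on_pair sum_contrib_on_pair_swapped
    by (simp add: sum_subtractf)
qed

end

theorem lemma3p3:
  fixes kv :: "nat list" and Db :: "step list" and s :: nat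
  assumes pos: "\<forall>k\<in>set kv. k > 0"
    and dyck: "is_kdyck kv Db"
    and area_pos: "area Db > 0"
    and s_lt: "s < length Db"
    and s_red: "is_red (Db ! s)"
    and s_max: "\<forall>j<length Db. is_red (Db ! j) \<longrightarrow> rank Db j \<le> rank Db s"
    and s_rightmost: "\<forall>j<length Db. s < j \<and> is_red (Db ! j) \<longrightarrow> rank Db j < rank Db s"
  shows "dinv Db - dinv (swap_adj Db s) = area (sweep Db) - area (sweep (swap_adj Db s))"
proof -
  obtain k where nth_s: "Db ! s = Red k"
    using s_red by (cases "Db ! s") auto
  have "Red k \<in> set Db"
    using nth_mem[OF s_lt] nth_s by simp
  then have "k \<in> set kv"
    using Red_in_red_lengths dyck by (auto simp: is_kdyck_def)
  then have "0 < k"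
    using pos by blast
  have "0 < rank Db s"
  proof (rule ccontr)
    assume "\<not> 0 < rank Db s"
    then have "area Db \<le> 0"
      unfolding area_def using s_max by (intro sum_nonpos) force
    then show False
      using area_pos by simp
  qed
  then interpret highest_red_swap Db s k
    using s_lt nth_s \<open>0 < k\<close> s_max s_rightmost rank_length_kdyck[OF dyck]
    by unfold_locales auto
  show ?thesis
    using dinv_minus_area_sweep_swap by simp
qed

end
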